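(* Let $b$ be an integer with $2\le b\le 10$. All solutions of $$P_n=b^{d}Q_m+P_k$$ in nonnegative integers $n,m,k$, where $d$ is the number of digits of $P_k$ in base $b$, are given by the following representations (in particular $P_n\in\{5,12,29,70\}$): $$5=P_3=2^1Q_0+P_1=2^1Q_1+P_1,$$ $$12=P_4=5^1Q_0+P_2=5^1Q_1+P_2=2^1Q_2+P_0,$$ $$12=P_4=6^1Q_0+P_0=6^1Q_1+P_0,$$ $$29=P_5=2^1Q_3+P_1,$$ $$70=P_6=5^1Q_3+P_0.$$
   Context: $(P_n)_{n\ge0}$ is the Pell sequence: $P_0=0$, $P_1=1$, $P_n=2P_{n-1}+P_{n-2}$ for $n\ge2$. $(Q_n)_{n\ge0}$ is the Pell–Lucas sequence: $Q_0=2$, $Q_1=2$, $Q_n=2Q_{n-1}+Q_{n-2}$ for $n\ge2$. For a positive integer $N$, the number of digits of $N$ in base $b$ is $\lfloor \log_b N\rfloor+1$; the number $0$ (i.e. $P_0$) is taken to have $d=1$ digit. *)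

theory Defs
  imports Complex_Main
begin

fun pell :: "nat \<Rightarrow> nat" where
  "pell 0 = 0"
| "pell (Suc 0) = 1"
| "pell (Suc (Suc n)) = 2 * pell (Suc n) + pell n"

fun pell_lucas :: "nat \<Rightarrow> nat" where
  "pell_lucas 0 = 2"
| "pell_lucas (Suc 0) = 2"
| "pell_lucas (Suc (Suc n)) = 2 * pell_lucas (Suc n) + pell_lucas n"

definition num_digits :: "nat \<Rightarrow> nat \<Rightarrow> nat" where
  "num_digits b N = (if N = 0 then 1 else nat \<lfloor>log (real b) (real N)\<rfloor> + 1)"

end

theory Submission
  imports Defs "HOL-Computational_Algebra.Primes" "HOL-Library.Log_Nat"
begin

(* Writing n = r + m, the product formula
   P_(r+m) = P_r Q_m +- P_|r-m| shows that either b^d = P_r, or Q_m is at most P_k + P_|r-m|;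
   in both cases m <= 2k + 4 and b^d divides a product P_a Q_c with a, c = O(k).
   Lifting-the-exponent bounds for 2, 3, 5, 7 in Pell and Pell-Lucas numbers then give
   b^d = O(k^3), while b^d > P_k grows exponentially, so k <= 16. The remaining
   finitely many (b, k, m) are settled by evaluation. *)

section \<open>Binet formulas and product identities\<close>

definition pell_alpha :: real where "pell_alpha = 1 + sqrt 2"
definition pell_beta :: real where "pell_beta = 1 - sqrt 2"

lemma pell_alpha_mult_beta: "pell_alpha * pell_beta = -1"
  by (simp add: pell_alpha_def pell_beta_def algebra_simps)

lemma pell_alpha_minus_beta: "pell_alpha - pell_beta = 2 * sqrt 2"
  by (simp add: pell_alpha_def pell_beta_def)

lemma power_Suc_Suc_of_pell_root:
  fixes x :: "'a :: comm_ring_1"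
  assumes "x\<^sup>2 = 2 * x + 1"
  shows "x ^ Suc (Suc n) = 2 * x ^ Suc n + x ^ n"
proof -
  have "x ^ Suc (Suc n) = x\<^sup>2 * x ^ n" by (simp add: power2_eq_square)
  then show ?thesis using assms by (simp add: algebra_simps)
qed

lemma pell_alpha_power_Suc_Suc: "pell_alpha ^ Suc (Suc n) = 2 * pell_alpha ^ Suc n + pell_alpha ^ n"
  by (rule power_Suc_Suc_of_pell_root) (simp add: pell_alpha_def power2_eq_square algebra_simps)

lemma pell_beta_power_Suc_Suc: "pell_beta ^ Suc (Suc n) = 2 * pell_beta ^ Suc n + pell_beta ^ n"
  by (rule power_Suc_Suc_of_pell_root) (simp add: pell_beta_def power2_eq_square algebra_simps)

lemma pell_binet: "real (pell n) = (pell_alpha ^ n - pell_beta ^ n) / (pell_alpha - pell_beta)"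
proof (induction n rule: pell.induct)
  case (3 n)
  have "real (pell (Suc (Suc n))) = 2 * real (pell (Suc n)) + real (pell n)"
    by simp
  also have "\<dots> = (2 * (pell_alpha ^ Suc n - pell_beta ^ Suc n) + (pell_alpha ^ n - pell_beta ^ n))
      / (pell_alpha - pell_beta)"
    unfolding 3 by (simp add: add_divide_distrib)
  also have "\<dots> = (pell_alpha ^ Suc (Suc n) - pell_beta ^ Suc (Suc n)) / (pell_alpha - pell_beta)"
    unfolding pell_alpha_power_Suc_Suc pell_beta_power_Suc_Suc by (simp add: algebra_simps)
  finally show ?case .
qed (simp_all add: pell_alpha_def pell_beta_def)

lemma pell_lucas_binet: "real (pell_lucas n) = pell_alpha ^ n + pell_beta ^ n"
proof (induction n rule: pell_lucas.induct)
  case (3 n)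
  have "real (pell_lucas (Suc (Suc n))) = 2 * real (pell_lucas (Suc n)) + real (pell_lucas n)"
    by simp
  also have "\<dots> = pell_alpha ^ Suc (Suc n) + pell_beta ^ Suc (Suc n)"
    unfolding 3 pell_alpha_power_Suc_Suc pell_beta_power_Suc_Suc by (simp add: algebra_simps)
  finally show ?case .
qed (simp_all add: pell_alpha_def pell_beta_def)

lemma minus_one_power_eq_pell_roots: "(-1 :: real) ^ n = pell_alpha ^ n * pell_beta ^ n"
  by (simp add: pell_alpha_mult_beta flip: power_mult_distrib)

lemma pell_mult_pell_lucas_ge:
  assumes "n \<le> m"
  shows "int (pell m) * int (pell_lucas n) = int (pell (m + n)) + (-1) ^ n * int (pell (m - n))"
proof -
  obtain c where m: "m = c + n" using assms le_iff_add by (metis add.commute)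
  define A B X Y w where defs: "A = pell_alpha ^ c" "B = pell_beta ^ c" "X = pell_alpha ^ n"
    "Y = pell_beta ^ n" "w = pell_alpha - pell_beta"
  have "w \<noteq> 0" by (simp add: defs pell_alpha_minus_beta)
  have "real (pell m) * real (pell_lucas n) = (A * X - B * Y) / w * (X + Y)"
    by (simp add: m pell_binet pell_lucas_binet power_add defs)
  also have "\<dots> = (A * X * X - B * Y * Y) / w + X * Y * ((A - B) / w)"
    using \<open>w \<noteq> 0\<close> by (simp add: field_simps)
  also have "\<dots> = real (pell (m + n)) + (-1) ^ n * real (pell (m - n))"
    by (simp add: m pell_binet minus_one_power_eq_pell_roots power_add defs)
  finally have "real_of_int (int (pell m) * int (pell_lucas n))
      = real_of_int (int (pell (m + n)) + (-1) ^ n * int (pell (m - n)))"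
    by simp
  then show ?thesis by (simp only: of_int_eq_iff)
qed

lemma pell_mult_pell_lucas_le:
  assumes "m \<le> n"
  shows "int (pell m) * int (pell_lucas n) = int (pell (m + n)) - (-1) ^ m * int (pell (n - m))"
proof -
  obtain c where n: "n = c + m" using assms le_iff_add by (metis add.commute)
  define A B X Y w where defs: "A = pell_alpha ^ c" "B = pell_beta ^ c" "X = pell_alpha ^ m"
    "Y = pell_beta ^ m" "w = pell_alpha - pell_beta"
  have "w \<noteq> 0" by (simp add: defs pell_alpha_minus_beta)
  have "real (pell m) * real (pell_lucas n) = (X - Y) / w * (A * X + B * Y)"
    by (simp add: n pell_binet pell_lucas_binet power_add defs)
  also have "\<dots> = (A * X * X - B * Y * Y) / w - X * Y * ((A - B) / w)"
    using \<open>w \<noteq> 0\<close> by (simp add: field_simps)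
  also have "\<dots> = real (pell (m + n)) - (-1) ^ m * real (pell (n - m))"
    by (simp add: n pell_binet minus_one_power_eq_pell_roots power_add defs)
  finally have "real_of_int (int (pell m) * int (pell_lucas n))
      = real_of_int (int (pell (m + n)) - (-1) ^ m * int (pell (n - m)))"
    by simp
  then show ?thesis by (simp only: of_int_eq_iff)
qed

lemma pell_lucas_square_minus_pell_square:
  "(int (pell_lucas n))\<^sup>2 - 8 * (int (pell n))\<^sup>2 = 4 * (-1) ^ n"
proof -
  define X Y w where defs: "X = pell_alpha ^ n" "Y = pell_beta ^ n" "w = pell_alpha - pell_beta"
  have "w\<^sup>2 = 8" by (simp add: defs pell_alpha_minus_beta power2_eq_square)
  have "(real (pell_lucas n))\<^sup>2 - 8 * (real (pell n))\<^sup>2 = (X + Y)\<^sup>2 - 8 * ((X - Y) / w)\<^sup>2"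
    by (simp add: pell_binet pell_lucas_binet defs)
  also have "\<dots> = (X + Y)\<^sup>2 - (X - Y)\<^sup>2"
    using \<open>w\<^sup>2 = 8\<close> by (simp add: power_divide)
  also have "\<dots> = 4 * (X * Y)"
    by (simp add: power2_eq_square algebra_simps)
  also have "\<dots> = 4 * (-1) ^ n"
    by (simp add: minus_one_power_eq_pell_roots defs)
  finally have "real_of_int ((int (pell_lucas n))\<^sup>2 - 8 * (int (pell n))\<^sup>2) = real_of_int (4 * (-1) ^ n)"
    by simp
  then show ?thesis by (simp only: of_int_eq_iff)
qed

section \<open>Growth and residues\<close>

lemma pell_less_pell_Suc: "pell n < pell (Suc n)"
  by (induction n rule: pell.induct) simp_all

lemma strict_mono_pell: "strict_mono pell"
  by (simp add: strict_mono_Suc_iff pell_less_pell_Suc)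

lemma pell_less_iff [simp]: "pell m < pell n \<longleftrightarrow> m < n"
  using strict_mono_less[OF strict_mono_pell] .

lemma pell_le_iff [simp]: "pell m \<le> pell n \<longleftrightarrow> m \<le> n"
  using strict_mono_less_eq[OF strict_mono_pell] .

lemma pell_eq_iff [simp]: "pell m = pell n \<longleftrightarrow> m = n"
  using strict_mono_eq[OF strict_mono_pell] .

lemma pell_pos_iff [simp]: "0 < pell n \<longleftrightarrow> 0 < n"
  using pell_less_iff[of 0 n] by simp

lemma double_pell_le_pell_Suc: "2 * pell n \<le> pell (Suc n)"
  by (cases n) simp_all

lemma pell_add_4_ge: "29 * pell n \<le> pell (n + 4)"
proof -
  have "pell (n + 4) = 12 * pell (Suc n) + 5 * pell n"
    by (simp add: numeral_eq_Suc)
  then show ?thesis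
    using double_pell_le_pell_Suc[of n] by simp
qed

lemma pell_lucas_Suc: "pell_lucas (Suc n) = pell (Suc (Suc n)) + pell n"
  by (induction n rule: pell.induct) (simp_all add: numeral_eq_Suc)

lemma two_le_pell_lucas: "2 \<le> pell_lucas n"
  by (induction n rule: pell_lucas.induct) simp_all

lemma pell_lucas_le_pell_lucas_Suc: "pell_lucas n \<le> pell_lucas (Suc n)"
  by (cases n) simp_all

lemma pell_less_pell_lucas: "pell n < pell_lucas n"
  by (cases n) (simp_all add: pell_lucas_Suc)

lemma pell_lucas_le_double_pell_Suc: "pell_lucas n \<le> 2 * pell (Suc n)"
  by (cases n) (simp_all add: pell_lucas_Suc)

lemma pell_mod_2: "pell n mod 2 = n mod 2"
  by (induction n rule: pell.induct) (simp_all add: mod_Suc)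

lemma pell_double: "pell (2 * n) = pell n * pell_lucas n"
  using pell_mult_pell_lucas_le[of n n] by (simp add: mult_2 flip: of_nat_mult)

lemma pell_mult_pell_lucas_le_double_pell_add: "pell k * pell_lucas m \<le> 2 * pell (k + m)"
proof -
  have "int (pell k) * int (pell_lucas m) \<le> 2 * int (pell (k + m))"
  proof (cases "m \<le> k")
    case True
    have "(-1) ^ m * int (pell (k - m)) \<le> int (pell (k + m))"
      by (rule order_trans[of _ "int (pell (k - m))"]) (auto simp: minus_one_power_iff)
    then show ?thesis using pell_mult_pell_lucas_ge[OF True] by simp
  next
    case False
    have "- ((-1) ^ k * int (pell (m - k))) \<le> int (pell (k + m))"
      by (rule order_trans[of _ "int (pell (m - k))"]) (auto simp: minus_one_power_iff)
    then show ?thesis using pell_mult_pell_lucas_le[of k m] False by simp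
  qed
  then show ?thesis by (simp flip: of_nat_mult)
qed

lemma abs_pell_add_minus_pell_mult_pell_lucas:
  "\<bar>int (pell (r + m)) - int (pell r) * int (pell_lucas m)\<bar> = int (pell (if m \<le> r then r - m else m - r))"
proof (cases "m \<le> r")
  case True
  then show ?thesis using pell_mult_pell_lucas_ge[OF True] by (simp add: abs_mult)
next
  case False
  then show ?thesis using pell_mult_pell_lucas_le[of r m] by (simp add: abs_mult add.commute)
qed

lemma pell_add_double_minus_pell:
  "\<exists>a c. {a, c} = {h, k + h} \<and> pell (k + 2 * h) - pell k = pell a * pell_lucas c"
proof (cases "even h")
  case True
  then have "int (pell h) * int (pell_lucas (k + h)) = int (pell (k + 2 * h)) - int (pell k)"
    using pell_mult_pell_lucas_le[of h "k + h"] by (simp add: algebra_simps mult_2)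
  then have "pell (k + 2 * h) - pell k = pell h * pell_lucas (k + h)"
    by (simp add: of_nat_diff flip: of_nat_mult)
  then show ?thesis by blast
next
  case False
  then have "int (pell (k + h)) * int (pell_lucas h) = int (pell (k + 2 * h)) - int (pell k)"
    using pell_mult_pell_lucas_ge[of h "k + h"] by (simp add: algebra_simps mult_2)
  then have "pell (k + 2 * h) - pell k = pell (k + h) * pell_lucas h"
    by (simp add: of_nat_diff flip: of_nat_mult)
  then show ?thesis by blast
qed

lemma pell_lucas_mod_4: "pell_lucas n mod 4 = 2"
proof (induction n rule: pell_lucas.induct)
  case (3 n)
  have "pell_lucas (Suc (Suc n)) mod 4 = (2 * (pell_lucas (Suc n) mod 4) mod 4 + pell_lucas n mod 4) mod 4"
    by (simp add: mod_add_eq mod_mult_right_eq)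
  then show ?case using 3 by simp
qed simp_all

lemma even_pell_lucas: "even (pell_lucas n)"
proof -
  have "pell_lucas n mod 2 = pell_lucas n mod 4 mod 2" by (simp add: mod_mod_cancel)
  then show ?thesis by (simp add: pell_lucas_mod_4 even_iff_mod_2_eq_zero)
qed

section \<open>Prime powers dividing Pell and Pell--Lucas numbers\<close>

lemma pow2_dvd_pell_imp_dvd: "0 < n \<Longrightarrow> 2 ^ e dvd pell n \<Longrightarrow> 2 ^ e dvd n"
proof (induction e arbitrary: n)
  case (Suc e)
  have "even (pell n)" using Suc.prems(2) by (simp add: dvd_mult_left)
  then have "even n" using pell_mod_2[of n] by (simp add: even_iff_mod_2_eq_zero)
  then obtain t where n: "n = 2 * t" ..
  define u where "u = 2 * (pell_lucas t div 4) + 1"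
  have u: "pell_lucas t = 2 * u"
    using pell_lucas_mod_4[of t] div_mult_mod_eq[of "pell_lucas t" 4] by (simp add: u_def)
  have "pell n = 2 * (pell t * u)" by (simp add: n pell_double u)
  then have "2 * 2 ^ e dvd 2 * (pell t * u)"
    using Suc.prems(2) by simp
  then have "2 ^ e dvd pell t * u" by simp
  moreover have "coprime (2 ^ e) u" by (simp add: u_def)
  ultimately have "2 ^ e dvd pell t" using coprime_dvd_mult_left_iff by blast
  then show ?case using Suc.IH[of t] Suc.prems(1) by (simp add: n)
qed simp

lemma pow2_dvd_pell_lucas_imp: "2 ^ e dvd pell_lucas n \<Longrightarrow> e \<le> 1"
proof (rule ccontr)
  assume "2 ^ e dvd pell_lucas n" "\<not> e \<le> 1"
  moreover have "(2::nat) ^ 2 dvd 2 ^ e" using \<open>\<not> e \<le> 1\<close> by (intro le_imp_power_dvd) simp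
  ultimately have "2 ^ 2 dvd pell_lucas n" using dvd_trans by blast
  then show False using pell_lucas_mod_4[of n] by simp
qed

fun lucas_U :: "int \<Rightarrow> int \<Rightarrow> nat \<Rightarrow> int" where
  "lucas_U P Q 0 = 0"
| "lucas_U P Q (Suc 0) = 1"
| "lucas_U P Q (Suc (Suc j)) = P * lucas_U P Q (Suc j) - Q * lucas_U P Q j"

text \<open>With \<open>D = P\<^sup>2 - 4 * Q\<close>, the number \<open>2 ^ j * lucas_U P Q (Suc j)\<close> is
  \<open>\<Sum>i. (Suc j choose (2 * i + 1)) * P ^ (j - 2 * i) * D ^ i\<close>, whose terms with \<open>i > 0\<close>
  vanish modulo \<open>D\<close>.\<close>

lemma lucas_U_congruence: "P\<^sup>2 - 4 * Q dvd 2 ^ j * lucas_U P Q (Suc j) - int (Suc j) * P ^ j"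
proof (induction j rule: induct_nat_012)
  case (ge2 l)
  define D where "D j = 2 ^ j * lucas_U P Q (Suc j) - int (Suc j) * P ^ j" for j
  have "P\<^sup>2 - 4 * Q dvd D l" "P\<^sup>2 - 4 * Q dvd D (Suc l)"
    using ge2 unfolding D_def by simp_all
  then have "P\<^sup>2 - 4 * Q dvd 2 * P * D (Suc l) - 4 * Q * D l + int (Suc l) * P ^ l * (P\<^sup>2 - 4 * Q)"
    by (intro dvd_add dvd_diff dvd_mult dvd_refl)
  also have "2 * P * D (Suc l) - 4 * Q * D l + int (Suc l) * P ^ l * (P\<^sup>2 - 4 * Q) = D (Suc (Suc l))"
    unfolding D_def by (simp add: algebra_simps power2_eq_square)
  finally show ?case unfolding D_def .
qed simp_all

abbreviation pell_quotient :: "nat \<Rightarrow> nat \<Rightarrow> int" where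
  "pell_quotient s \<equiv> lucas_U (int (pell_lucas s)) ((-1) ^ s)"

lemma pell_mult_eq_pell_quotient: "int (pell (j * s)) = int (pell s) * pell_quotient s j"
proof (induction j rule: induct_nat_012)
  case (ge2 l)
  have "int (pell (Suc l * s)) * int (pell_lucas s) = int (pell (Suc (Suc l) * s)) + (-1) ^ s * int (pell (l * s))"
    using pell_mult_pell_lucas_ge[of s "Suc l * s"] by (simp add: add.commute)
  then show ?case using ge2 by (simp add: algebra_simps)
qed simp_all

lemma pell_square_dvd_pell_quotient_congruence:
  "(int (pell s))\<^sup>2 dvd 2 ^ j * pell_quotient s (Suc j) - int (Suc j) * int (pell_lucas s) ^ j"
proof -
  have "(int (pell_lucas s))\<^sup>2 - 4 * (-1) ^ s = 8 * (int (pell s))\<^sup>2"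
    using pell_lucas_square_minus_pell_square[of s] by simp
  then show ?thesis
    using lucas_U_congruence[of "int (pell_lucas s)" "(-1) ^ s" j] by (metis dvd_mult_right)
qed

lemma odd_prime_dvd_pell_imp_not_dvd_pell_lucas:
  assumes "prime p" "p \<noteq> 2" "p dvd pell s"
  shows "\<not> p dvd pell_lucas s"
proof
  assume "p dvd pell_lucas s"
  with assms(3) have "int p dvd (int (pell_lucas s))\<^sup>2 - 8 * (int (pell s))\<^sup>2"
    by (auto simp: power2_eq_square intro: dvd_diff)
  then have "int p dvd 4" unfolding pell_lucas_square_minus_pell_square
    by (auto simp: minus_one_power_iff split: if_splits)
  then have "p dvd 2 ^ 2" using int_dvd_int_iff[of p 4] by simp
  then have "p dvd 2" using \<open>prime p\<close> prime_dvd_power by blast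
  then show False using assms(1,2) dvd_imp_le[of p 2] prime_ge_2_nat[of p] by simp
qed

lemma prime_power_Suc_dvd_mult_imp:
  fixes p x y :: int
  assumes "prime p" "p ^ Suc a dvd x * y" "\<not> p\<^sup>2 dvd y"
  shows "p ^ a dvd x"
proof (cases "p dvd y")
  case False
  then have "coprime (p ^ Suc a) y" using assms(1) by (simp add: prime_imp_coprime)
  then have "p ^ Suc a dvd x" using assms(2) coprime_dvd_mult_left_iff by blast
  then show ?thesis by (rule dvd_trans[rotated]) (simp add: le_imp_power_dvd)
next
  case True
  then obtain z where y: "y = p * z" ..
  have "p \<noteq> 0" using assms(1) by auto
  then have "p ^ a dvd x * z" using assms(2) by (simp add: y ac_simps)
  moreover have "coprime (p ^ a) z" using assms(1,3) by (simp add: y power2_eq_square prime_imp_coprime)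
  ultimately show ?thesis using coprime_dvd_mult_left_iff by blast
qed

lemma pell_quotient_not_dvd:
  assumes "prime p" "p \<noteq> 2" "p dvd pell s" "\<not> p dvd j"
  shows "\<not> int p dvd pell_quotient s j"
proof
  assume U: "int p dvd pell_quotient s j"
  obtain i where j: "j = Suc i" using assms(4) by (cases j) auto
  have "prime (int p)" using assms(1) by simp
  have "int p dvd (int (pell s))\<^sup>2" using assms(3) by (simp add: power2_eq_square)
  then have "int p dvd 2 ^ i * pell_quotient s j - int j * int (pell_lucas s) ^ i"
    using dvd_trans[OF _ pell_square_dvd_pell_quotient_congruence[of s i]] j by simp
  then have "int p dvd int j * int (pell_lucas s) ^ i" using U by (simp add: dvd_diff_right_iff)
  then have "int p dvd int j \<or> int p dvd int (pell_lucas s) ^ i"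
    using prime_dvd_mult_iff[OF \<open>prime (int p)\<close>] by blast
  then have "int p dvd int j \<or> int p dvd int (pell_lucas s)"
    using prime_dvd_power[OF \<open>prime (int p)\<close>] by blast
  then show False
    using assms(4) odd_prime_dvd_pell_imp_not_dvd_pell_lucas[OF assms(1-3)] by simp
qed

lemma pell_quotient_prime_not_square_dvd:
  assumes "prime p" "p \<noteq> 2" "p dvd pell s"
  shows "\<not> (int p)\<^sup>2 dvd pell_quotient s p"
proof
  assume U: "(int p)\<^sup>2 dvd pell_quotient s p"
  obtain i where p: "p = Suc i" using assms(1) by (cases p) auto
  have "(int p)\<^sup>2 dvd (int (pell s))\<^sup>2" using assms(3) by simp
  then have "(int p)\<^sup>2 dvd 2 ^ i * pell_quotient s p - int p * int (pell_lucas s) ^ i"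
    using dvd_trans[OF _ pell_square_dvd_pell_quotient_congruence[of s i]] p by simp
  then have "int p * int p dvd int p * int (pell_lucas s) ^ i"
    using U by (simp add: dvd_diff_right_iff power2_eq_square)
  then have "int p dvd int (pell_lucas s) ^ i" using assms(1) by simp
  moreover have "prime (int p)" using assms(1) by simp
  ultimately have "int p dvd int (pell_lucas s)" using prime_dvd_power by metis
  then show False
    using odd_prime_dvd_pell_imp_not_dvd_pell_lucas[OF assms] by simp
qed

lemma prime_square_dvd_pell_mult_imp:
  assumes "prime p" "p \<noteq> 2" and rank: "p dvd pell r" and "\<not> p dvd j" "p\<^sup>2 dvd pell (j * r)"
  shows "p\<^sup>2 dvd pell r"
proof -
  have "int (p\<^sup>2) dvd int (pell (j * r))" using assms(5) by (simp only: int_dvd_int_iff)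
  then have "(int p)\<^sup>2 dvd int (pell r) * pell_quotient r j"
    by (simp only: pell_mult_eq_pell_quotient of_nat_power)
  moreover have "prime (int p)" using assms(1) by simp
  then have "coprime (int p) (pell_quotient r j)"
    using pell_quotient_not_dvd[OF assms(1-4)] by (simp add: prime_imp_coprime)
  then have "coprime ((int p)\<^sup>2) (pell_quotient r j)" by simp
  ultimately have "int (p\<^sup>2) dvd int (pell r)"
    using coprime_dvd_mult_left_iff by (simp only: of_nat_power) blast
  then show ?thesis by (simp only: int_dvd_int_iff)
qed

lemma prime_power_dvd_pell_mult_prime_imp:
  assumes "prime p" "p \<noteq> 2" "p dvd pell s" "p ^ Suc (Suc e) dvd pell (p * s)"
  shows "p ^ Suc e dvd pell s"
proof -
  have "int (p ^ Suc (Suc e)) dvd int (pell (p * s))" using assms(4) by (simp only: int_dvd_int_iff)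
  then have "int p ^ Suc (Suc e) dvd int (pell s) * pell_quotient s p"
    by (simp only: pell_mult_eq_pell_quotient of_nat_power)
  moreover have "prime (int p)" using assms(1) by simp
  ultimately have "int p ^ Suc e dvd int (pell s)"
    using prime_power_Suc_dvd_mult_imp pell_quotient_prime_not_square_dvd[OF assms(1-3)] by blast
  then have "int (p ^ Suc e) dvd int (pell s)" by (simp only: of_nat_power)
  then show ?thesis by (simp only: int_dvd_int_iff)
qed

lemma prime_power_dvd_pell_imp_dvd:
  assumes "prime p" "p \<noteq> 2" and rank: "\<And>t. p dvd pell t \<longleftrightarrow> r dvd t"
    and "\<not> p\<^sup>2 dvd pell r"
  shows "0 < t \<Longrightarrow> p ^ Suc e dvd pell t \<Longrightarrow> p ^ e dvd t"
proof (induction e arbitrary: t)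
  case (Suc e)
  have "p dvd pell t" using Suc.prems(2) by (simp add: dvd_mult_left)
  then obtain j where t: "t = j * r" using rank by (metis dvd_def mult.commute)
  show ?case
  proof (cases "p dvd j")
    case False
    have "p\<^sup>2 dvd p ^ Suc (Suc e)" by (rule le_imp_power_dvd) simp
    then have "p\<^sup>2 dvd pell (j * r)" using dvd_trans[OF _ Suc.prems(2)] t by simp
    moreover have "p dvd pell r" using rank by simp
    ultimately have "p\<^sup>2 dvd pell r" using prime_square_dvd_pell_mult_imp[OF assms(1,2) _ False] by blast
    then show ?thesis using assms(4) by contradiction
  next
    case True
    then obtain j' where "j = p * j'" ..
    then have t: "t = p * (j' * r)" using t by simp
    have "p dvd pell (j' * r)" using rank by simp
    then have "p ^ Suc e dvd pell (j' * r)"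
      using prime_power_dvd_pell_mult_prime_imp[OF assms(1,2)] Suc.prems(2)[unfolded t] by blast
    then have "p ^ e dvd j' * r" using Suc.IH Suc.prems(1) t by simp
    then show ?thesis using t by simp
  qed
qed simp

section \<open>Evaluation along the Pell recurrence\<close>

definition pell_like :: "(nat \<Rightarrow> nat) \<Rightarrow> bool" where
  "pell_like f \<longleftrightarrow> (\<forall>j. f (Suc (Suc j)) = 2 * f (Suc j) + f j)"

lemma pell_like_pell: "pell_like pell"
  by (simp add: pell_like_def)

text \<open>Indices advance by \<open>+ 1\<close> rather than \<open>Suc\<close>, so that evaluation by the simplifier
  keeps them as numerals.\<close>

fun all_terms :: "nat \<Rightarrow> nat \<Rightarrow> nat \<Rightarrow> nat \<Rightarrow> (nat \<Rightarrow> nat \<Rightarrow> nat \<Rightarrow> bool) \<Rightarrow> bool"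
where
  "all_terms 0 i x y P \<longleftrightarrow> True"
| "all_terms (Suc l) i x y P \<longleftrightarrow> P i x y \<and> all_terms l (i + 1) y (2 * y + x) P"

lemma all_terms_numeral:
  "all_terms (numeral l) i x y P \<longleftrightarrow> P i x y \<and> all_terms (pred_numeral l) (i + 1) y (2 * y + x) P"
  "all_terms 1 i x y P \<longleftrightarrow> P i x y"
  by (simp_all add: numeral_eq_Suc)

lemma all_terms_iff:
  assumes "pell_like f"
  shows "all_terms l i (f i) (f (Suc i)) P \<longleftrightarrow>
    (\<forall>j. i \<le> j \<and> j < i + l \<longrightarrow> P j (f j) (f (Suc j)))"
proof (induction l arbitrary: i)
  case (Suc l)
  have "f (Suc (Suc i)) = 2 * f (Suc i) + f i" using assms by (simp add: pell_like_def)
  then have "all_terms (Suc l) i (f i) (f (Suc i)) P \<longleftrightarrow>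
      P i (f i) (f (Suc i)) \<and> (\<forall>j. Suc i \<le> j \<and> j < Suc i + l \<longrightarrow> P j (f j) (f (Suc j)))"
    using Suc.IH[of "Suc i"] by simp
  also have "\<dots> \<longleftrightarrow> (\<forall>j. i \<le> j \<and> j < i + Suc l \<longrightarrow> P j (f j) (f (Suc j)))"
    by (auto simp: Suc_le_eq) (metis le_neq_implies_less)
  finally show ?case .
qed auto

lemma pell_mod_add_period:
  assumes "pell q mod p = 0" "pell (Suc q) mod p = 1 mod p"
  shows "pell (t + q) mod p = pell t mod p"
proof (induction t rule: pell.induct)
  case (3 n)
  have "pell (Suc (Suc n) + q) mod p = (2 * pell (Suc n + q) + pell (n + q)) mod p"
    by simp
  also have "\<dots> = (2 * pell (Suc n) + pell n) mod p"
    using "3.IH" by (intro mod_add_cong mod_mult_cong) simp_all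
  finally show ?case by simp
qed (use assms in simp_all)

lemma pell_mod_period:
  assumes "pell q mod p = 0" "pell (Suc q) mod p = 1 mod p"
  shows "pell t mod p = pell (t mod q) mod p"
proof -
  have "pell (t mod q + c * q) mod p = pell (t mod q) mod p" for c
  proof (induction c)
    case (Suc c)
    have "pell (t mod q + Suc c * q) mod p = pell (t mod q + c * q + q) mod p"
      by (simp add: algebra_simps)
    also have "\<dots> = pell (t mod q + c * q) mod p"
      by (rule pell_mod_add_period[OF assms])
    finally show ?case using Suc.IH by simp
  qed simp
  then show ?thesis using mod_div_mult_eq[of t q] by metis
qed

text \<open>The hypothesis is a finite statement about \<open>pell 0, \<dots>, pell (Suc q)\<close>, to be
  discharged by evaluation.\<close>

lemma pell_dvd_iff_of_period:
  assumes "0 < q" "r dvd q"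
    and "all_terms (Suc q) 0 0 1 (\<lambda>t x y. (t < q \<longrightarrow> (p dvd x \<longleftrightarrow> r dvd t)) \<and>
      (t = q \<longrightarrow> x mod p = 0 \<and> y mod p = 1))"
  shows "p dvd pell t \<longleftrightarrow> r dvd t"
proof -
  have "all_terms (Suc q) 0 (pell 0) (pell (Suc 0))
      (\<lambda>t x y. (t < q \<longrightarrow> (p dvd x \<longleftrightarrow> r dvd t)) \<and>
      (t = q \<longrightarrow> x mod p = 0 \<and> y mod p = 1))"
    using assms(3) by simp
  then have terms: "\<forall>j. 0 \<le> j \<and> j < 0 + Suc q \<longrightarrow>
      (j < q \<longrightarrow> (p dvd pell j \<longleftrightarrow> r dvd j)) \<and>
      (j = q \<longrightarrow> pell j mod p = 0 \<and> pell (Suc j) mod p = 1)"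
    unfolding all_terms_iff[OF pell_like_pell] .
  have "pell q mod p = 0" "pell (Suc q) mod p = 1"
    using spec[OF terms, of q] by simp_all
  moreover from this(2) have "1 mod p = 1" by (metis mod_mod_trivial)
  ultimately have "pell t mod p = pell (t mod q) mod p"
    by (intro pell_mod_period) simp_all
  then have "p dvd pell t \<longleftrightarrow> p dvd pell (t mod q)"
    by (simp add: dvd_eq_mod_eq_0)
  also have "\<dots> \<longleftrightarrow> r dvd t mod q"
    using spec[OF terms, of "t mod q"] mod_less_divisor[OF \<open>0 < q\<close>, of t] by simp
  also have "\<dots> \<longleftrightarrow> r dvd t"
    using \<open>r dvd q\<close> by (simp add: dvd_mod_iff)
  finally show ?thesis .
qed

lemma three_dvd_pell_iff: "3 dvd pell t \<longleftrightarrow> 4 dvd t"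
  by (rule pell_dvd_iff_of_period[of 8]) (simp_all add: all_terms_numeral del: One_nat_def)

lemma five_dvd_pell_iff: "5 dvd pell t \<longleftrightarrow> 3 dvd t"
  by (rule pell_dvd_iff_of_period[of 12]) (simp_all add: all_terms_numeral del: One_nat_def)

lemma seven_dvd_pell_iff: "7 dvd pell t \<longleftrightarrow> 6 dvd t"
  by (rule pell_dvd_iff_of_period[of 6]) (simp_all add: all_terms_numeral del: One_nat_def)

lemma small_prime_power_dvd_pell_imp_dvd:
  assumes "p \<in> {3, 5, 7}" "0 < t" "p ^ Suc e dvd pell t"
  shows "p ^ e dvd t"
proof -
  have "pell 3 = 5" "pell 4 = 12" "pell 6 = 70" by (simp_all add: eval_nat_numeral)
  then show ?thesis using assms
    by (auto intro: prime_power_dvd_pell_imp_dvd[of 3 4] prime_power_dvd_pell_imp_dvd[of 5 3]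
        prime_power_dvd_pell_imp_dvd[of 7 6] simp: three_dvd_pell_iff five_dvd_pell_iff seven_dvd_pell_iff)
qed

lemma pell_17: "pell 17 = 1136689"
proof -
  have "all_terms 18 0 (pell 0) (pell (Suc 0)) (\<lambda>j x y. j = 17 \<longrightarrow> x = 1136689)"
    by (simp add: all_terms_numeral del: One_nat_def)
  then show ?thesis by (simp only: all_terms_iff[OF pell_like_pell]) simp
qed

lemma cubic_le_pell: "17 \<le> k \<Longrightarrow> 25 * (3 * k + 6)\<^sup>2 * (k + 6) \<le> 2 * pell k"
proof (induction k rule: dec_induct)
  case base
  then show ?case by (simp add: pell_17)
next
  case (step k)
  obtain j where k: "k = j + 17" using step(1) le_iff_add by (metis add.commute)
  have "25 * (3 * Suc k + 6)\<^sup>2 * (Suc k + 6) \<le> 2 * (25 * (3 * k + 6)\<^sup>2 * (k + 6))"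
    unfolding k by (simp add: power2_eq_square algebra_simps)
  also have "\<dots> \<le> 2 * (2 * pell k)" using step(3) by linarith
  also have "\<dots> \<le> 2 * pell (Suc k)" using double_pell_le_pell_Suc[of k] by simp
  finally show ?case .
qed

section \<open>Bounds for prime powers dividing a product \<open>P\<^sub>a Q\<^sub>c\<close>\<close>

lemma prime_power_dvd_mult_split:
  fixes p x y :: nat
  assumes "prime p" "x \<noteq> 0" "y \<noteq> 0" "p ^ e dvd x * y"
  shows "\<exists>e1 e2. e \<le> e1 + e2 \<and> p ^ e1 dvd x \<and> p ^ e2 dvd y"
proof -
  have "x * y \<noteq> 0" "\<not> is_unit p" using assms(1-3) not_prime_unit by auto
  then have "e \<le> multiplicity p (x * y)" using assms(4) by (rule multiplicity_geI)
  also have "\<dots> = multiplicity p x + multiplicity p y"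
    using assms(1-3) by (simp add: prime_elem_multiplicity_mult_distrib)
  finally show ?thesis using multiplicity_dvd by blast
qed

lemma pow2_dvd_pell_mult_pell_lucas_le:
  assumes "0 < a" "2 ^ e dvd pell a * pell_lucas c"
  shows "2 ^ e \<le> 2 * a"
proof -
  have "pell a \<noteq> 0" "pell_lucas c \<noteq> 0" using assms(1) two_le_pell_lucas[of c] by auto
  then obtain e1 e2 where e: "e \<le> e1 + e2" "2 ^ e1 dvd pell a" "2 ^ e2 dvd pell_lucas c"
    using prime_power_dvd_mult_split[OF two_is_prime_nat _ _ assms(2)] by blast
  have "2 ^ e1 \<le> a"
    using pow2_dvd_pell_imp_dvd[OF assms(1) e(2)] assms(1) by (rule dvd_imp_le)
  moreover have "(2::nat) ^ e2 \<le> 2"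
    using pow2_dvd_pell_lucas_imp[OF e(3)] by (cases e2) auto
  ultimately have "2 ^ e1 * 2 ^ e2 \<le> a * (2::nat)" by (rule mult_le_mono)
  moreover have "(2::nat) ^ e \<le> 2 ^ (e1 + e2)" using e(1) by (rule power_increasing) simp
  ultimately show ?thesis by (simp add: power_add)
qed

lemma small_prime_power_dvd_pell_le:
  assumes "p \<in> {3, 5, 7}" "0 < s" "p ^ e dvd pell s"
  shows "p ^ e \<le> p * s"
proof (cases e)
  case (Suc e')
  then have "p ^ e' dvd s" using small_prime_power_dvd_pell_imp_dvd assms by blast
  then have "p ^ e' \<le> s" using assms(2) by (rule dvd_imp_le)
  then show ?thesis using Suc by simp
qed (use assms in auto)

lemma small_prime_power_dvd_pell_lucas_le:
  assumes "p \<in> {3, 5, 7}" "0 < c" "p ^ e dvd pell_lucas c"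
  shows "p ^ e \<le> 2 * p * c"
proof -
  have "p ^ e dvd pell (2 * c)" unfolding pell_double using assms(3) by simp
  then have "p ^ e \<le> p * (2 * c)" using assms(1,2) by (intro small_prime_power_dvd_pell_le) simp_all
  then show ?thesis by simp
qed

lemma small_prime_power_dvd_pell_mult_pell_lucas_le:
  assumes "p \<in> {3, 5, 7}" "0 < a" "0 < c" "p ^ e dvd pell a * pell_lucas c"
  shows "p ^ e \<le> 2 * p\<^sup>2 * (a * c)"
proof -
  have "prime p" using assms(1) by auto
  moreover have "pell a \<noteq> 0" "pell_lucas c \<noteq> 0" using assms(2) two_le_pell_lucas[of c] by auto
  ultimately obtain e1 e2 where e: "e \<le> e1 + e2" "p ^ e1 dvd pell a" "p ^ e2 dvd pell_lucas c"
    using prime_power_dvd_mult_split[OF _ _ _ assms(4)] by blast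
  have "p ^ e1 * p ^ e2 \<le> (p * a) * (2 * p * c)"
    using small_prime_power_dvd_pell_le[OF assms(1,2) e(2)]
      small_prime_power_dvd_pell_lucas_le[OF assms(1,3) e(3)] by (rule mult_le_mono)
  moreover have "p ^ e \<le> p ^ (e1 + e2)" using e(1) assms(1) by (intro power_increasing) auto
  ultimately show ?thesis by (simp add: power_add power2_eq_square ac_simps)
qed

text \<open>The constant comes from \<open>b = 10\<close>, where \<open>2 ^ d \<le> 2 * a\<close> and
  \<open>5 ^ d \<le> 50 * a * c\<close>.\<close>

lemma base_power_dvd_pell_mult_pell_lucas_le:
  assumes "2 \<le> b" "b \<le> 10" "0 < a" "0 < c" "b ^ d dvd pell a * pell_lucas c"
  shows "b ^ d \<le> 100 * (a\<^sup>2 * c)"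
proof -
  have two: "2 ^ x \<le> 2 * a" if "2 ^ x dvd b ^ d" for x
    using pow2_dvd_pell_mult_pell_lucas_le[OF assms(3)] dvd_trans[OF that assms(5)] .
  have odd: "p ^ x \<le> 2 * p\<^sup>2 * (a * c)" if "p \<in> {3, 5, 7}" "p ^ x dvd b ^ d" for p x
    using small_prime_power_dvd_pell_mult_pell_lucas_le[OF that(1) assms(3,4)]
      dvd_trans[OF that(2) assms(5)] .
  have "a \<le> a\<^sup>2 * c" "a * c \<le> a\<^sup>2 * c"
    using assms(3,4) by (simp_all add: power2_eq_square)
  then have small: "2 * a \<le> 100 * (a\<^sup>2 * c)" "98 * (a * c) \<le> 100 * (a\<^sup>2 * c)"
    by linarith+
  have "b \<in> {2, 3, 4, 5, 6, 7, 8, 9, 10}" using assms(1,2) by auto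
  then show ?thesis
  proof (elim insertE)
    assume "b = 2"
    then have "b ^ d \<le> 2 * a" using two[of d] by simp
    then show ?thesis using small(1) by linarith
  next
    assume "b = 3"
    then have "b ^ d \<le> 18 * (a * c)" using odd[of 3 d] by simp
    then show ?thesis using small(2) by linarith
  next
    assume "b = 4"
    then have "b ^ d \<le> 2 * a" using two[of "2 * d"] by (simp add: power_mult)
    then show ?thesis using small(1) by linarith
  next
    assume "b = 5"
    then have "b ^ d \<le> 50 * (a * c)" using odd[of 5 d] by simp
    then show ?thesis using small(2) by linarith
  next
    assume "b = 6"
    then have bd: "b ^ d = 2 ^ d * 3 ^ d" by (simp flip: power_mult_distrib)
    then have "2 ^ d dvd b ^ d" "3 ^ d dvd b ^ d" by simp_all
    then have "2 ^ d \<le> 2 * a" "3 ^ d \<le> 2 * 3\<^sup>2 * (a * c)" using two[of d] odd[of 3 d] by simp_all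
    then have "b ^ d \<le> (2 * a) * (2 * 3\<^sup>2 * (a * c))"
      unfolding bd by (rule mult_le_mono)
    then show ?thesis by (simp add: power2_eq_square)
  next
    assume "b = 7"
    then have "b ^ d \<le> 98 * (a * c)" using odd[of 7 d] by simp
    then show ?thesis using small(2) by linarith
  next
    assume "b = 8"
    then have "b ^ d \<le> 2 * a" using two[of "3 * d"] by (simp add: power_mult)
    then show ?thesis using small(1) by linarith
  next
    assume "b = 9"
    then have "b ^ d \<le> 18 * (a * c)" using odd[of 3 "2 * d"] by (simp add: power_mult)
    then show ?thesis using small(2) by linarith
  next
    assume "b = 10"
    then have bd: "b ^ d = 2 ^ d * 5 ^ d" by (simp flip: power_mult_distrib)
    then have "2 ^ d dvd b ^ d" "5 ^ d dvd b ^ d" by simp_all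
    then have "2 ^ d \<le> 2 * a" "5 ^ d \<le> 2 * 5\<^sup>2 * (a * c)" using two[of d] odd[of 5 d] by simp_all
    then have "b ^ d \<le> (2 * a) * (2 * 5\<^sup>2 * (a * c))"
      unfolding bd by (rule mult_le_mono)
    then show ?thesis by (simp add: power2_eq_square)
  qed simp
qed

section \<open>Structure of the solutions\<close>

lemma pell_diff_factor_bound:
  assumes "k < n" "n mod 2 = k mod 2" "n \<le> 2 * k + 6"
  shows "\<exists>a c. 0 < a \<and> 0 < c \<and> pell n - pell k = pell a * pell_lucas c \<and>
    8 * (a\<^sup>2 * c) \<le> (3 * k + 6)\<^sup>2 * (k + 6)"
proof -
  define h where "h = (n - k) div 2"
  have n: "n = k + 2 * h" and "0 < h" using assms(1,2) unfolding h_def by presburger+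
  obtain a c where ac: "{a, c} = {h, k + h}" and diff: "pell n - pell k = pell a * pell_lucas c"
    using pell_add_double_minus_pell[of h k] n by blast
  have "h\<^sup>2 * (k + h) \<le> (k + h)\<^sup>2 * h"
    using mult_right_mono[of h "k + h" "h * (k + h)"] by (simp add: power2_eq_square ac_simps)
  with ac have "a\<^sup>2 * c \<le> (k + h)\<^sup>2 * h" by (auto simp: doubleton_eq_iff)
  then have "8 * (a\<^sup>2 * c) \<le> (2 * k + 2 * h)\<^sup>2 * (2 * h)"
    by (simp add: power2_eq_square algebra_simps)
  also have "\<dots> \<le> (3 * k + 6)\<^sup>2 * (k + 6)"
    using assms(3) n by (intro mult_le_mono power_mono) simp_all
  finally show ?thesis using ac diff \<open>0 < h\<close> by (auto simp: doubleton_eq_iff)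
qed

text \<open>\<open>B\<close> stands for \<open>b ^ d\<close>, where \<open>d\<close> is the number of base-\<open>b\<close> digits of
  \<open>pell k\<close>; the assumptions are all that is used about it (the \<open>max\<close> covers \<open>pell 0 = 0\<close>,
  which has one digit).\<close>

locale pell_concatenation =
  fixes B n m k :: nat
  assumes concatenation: "pell n = B * pell_lucas m + pell k"
    and two_le_B: "2 \<le> B"
    and pell_less_B: "pell k < B"
    and B_le: "B \<le> 10 * max 1 (pell k)"
begin

lemma lucas_index_less: "m < n"
proof -
  have "pell m < pell_lucas m" by (rule pell_less_pell_lucas)
  also have "\<dots> \<le> B * pell_lucas m" using two_le_B by simp
  also have "\<dots> \<le> pell n" using concatenation by simp
  finally show ?thesis by simp
qed

lemma index_parity: "n mod 2 = k mod 2"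
proof -
  have "even (B * pell_lucas m)" by (simp add: even_pell_lucas)
  then obtain t where "B * pell_lucas m = 2 * t" ..
  then have "pell n mod 2 = pell k mod 2" using concatenation by simp
  then show ?thesis by (simp add: pell_mod_2)
qed

lemma pos_imp_index_le: "0 < k \<Longrightarrow> n \<le> k + m + 3"
proof -
  assume "0 < k"
  then have "max 1 (pell k) = pell k" by (simp add: max_def Suc_le_eq)
  then have "B \<le> 10 * pell k" using B_le by simp
  then have "B * pell_lucas m \<le> 10 * (pell k * pell_lucas m)"
    using mult_right_mono by fastforce
  moreover have "pell k \<le> pell k * pell_lucas m"
    using mult_le_mono2[of 1 "pell_lucas m" "pell k"] two_le_pell_lucas[of m] by simp
  ultimately have "pell n \<le> 11 * (pell k * pell_lucas m)"
    using concatenation by linarith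
  also have "\<dots> \<le> 22 * pell (k + m)" using pell_mult_pell_lucas_le_double_pell_add[of k m] by simp
  also have "\<dots> < 29 * pell (k + m)" using \<open>0 < k\<close> by simp
  also have "\<dots> \<le> pell (k + m + 4)" by (rule pell_add_4_ge)
  finally show ?thesis by simp
qed

lemma index_le: "n \<le> k + m + 4"
proof (cases "k = 0")
  case True
  then have "pell n \<le> 10 * pell_lucas m" using concatenation B_le by simp
  also have "\<dots> \<le> 20 * pell (Suc m)" using pell_lucas_le_double_pell_Suc[of m] by simp
  also have "\<dots> < 29 * pell (Suc m)" by simp
  also have "\<dots> \<le> pell (Suc m + 4)" by (rule pell_add_4_ge)
  finally show ?thesis using True by simp
qed (use pos_imp_index_le in simp)

lemma abs_concatenation:
  "\<bar>(int B - int (pell (n - m))) * int (pell_lucas m) + int (pell k)\<bar>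
    = int (pell (if m \<le> n - m then n - m - m else m - (n - m)))"
  using abs_pell_add_minus_pell_mult_pell_lucas[of "n - m" m] lucas_index_less concatenation
  by (simp add: algebra_simps)

lemma aligned_lucas_index_le: "pell (n - m) = B \<Longrightarrow> m \<le> n - m + k"
  using abs_concatenation by (auto split: if_splits)

lemma unaligned_lucas_index: "pell (n - m) \<noteq> B \<Longrightarrow> m < k \<or> m \<le> n - m"
proof (rule disjCI)
  assume "pell (n - m) \<noteq> B" "\<not> m \<le> n - m"
  define j where "j = m - (n - m)"
  have "1 \<le> \<bar>int B - int (pell (n - m))\<bar>" using \<open>pell (n - m) \<noteq> B\<close> by linarith
  then have "int (pell_lucas m) \<le> \<bar>(int B - int (pell (n - m))) * int (pell_lucas m)\<bar>"
    using mult_right_mono[of 1 _ "int (pell_lucas m)"] by (simp add: abs_mult)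
  also have "\<dots> \<le> int (pell j) + int (pell k)"
    using abs_concatenation \<open>\<not> m \<le> n - m\<close> unfolding j_def by simp
  finally have "pell_lucas m \<le> pell j + pell k" by linarith
  moreover obtain m' where m: "m = Suc m'" using \<open>\<not> m \<le> n - m\<close> by (cases m) auto
  moreover have "pell j \<le> pell m'" using lucas_index_less m unfolding j_def by simp
  ultimately have "pell (Suc (Suc m')) \<le> pell k" using pell_lucas_Suc[of m'] by (simp only: m)
  then show "m < k" unfolding m pell_le_iff by simp
qed

lemma lucas_index_le: "m \<le> 2 * k + 4"
proof (cases "pell (n - m) = B")
  case True
  then show ?thesis using aligned_lucas_index_le index_le by linarith
next
  case False
  then show ?thesis using unaligned_lucas_index index_le by linarith
qed

text \<open>If \<open>pell (n - m) = B\<close>, then \<open>B\<close> divides \<open>pell (n - m) * pell_lucas 1\<close>; otherwise \<open>n - k\<close>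
  is even and \<open>B * pell_lucas m = pell n - pell k\<close> factors as \<open>pell a * pell_lucas c\<close>.\<close>

lemma divisor_witness:
  assumes "0 < k"
  shows "\<exists>a c. 0 < a \<and> 0 < c \<and> B dvd pell a * pell_lucas c \<and>
    8 * (a\<^sup>2 * c) \<le> (3 * k + 6)\<^sup>2 * (k + 6)"
proof (cases "pell (n - m) = B")
  case True
  have "8 * ((n - m)\<^sup>2 * 1) \<le> 8 * (k + 3)\<^sup>2" using pos_imp_index_le[OF assms] by simp
  also have "\<dots> \<le> (3 * k + 6)\<^sup>2 * (k + 6)" by (simp add: power2_eq_square algebra_simps)
  finally show ?thesis using True lucas_index_less by (intro exI[of _ "n - m"] exI[of _ 1]) auto
next
  case False
  have "m \<le> k + 3" using unaligned_lucas_index[OF False] pos_imp_index_le[OF assms] by linarith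
  then have "n \<le> 2 * k + 6" using pos_imp_index_le[OF assms] by linarith
  moreover have "0 < B * pell_lucas m" using two_le_B two_le_pell_lucas[of m] by simp
  then have "pell k < pell n" using concatenation by simp
  then have "k < n" by simp
  ultimately obtain a c where "0 < a" "0 < c" "pell n - pell k = pell a * pell_lucas c"
      "8 * (a\<^sup>2 * c) \<le> (3 * k + 6)\<^sup>2 * (k + 6)"
    using pell_diff_factor_bound index_parity by blast
  moreover have "pell n - pell k = B * pell_lucas m" using concatenation by simp
  ultimately show ?thesis by (metis dvd_triv_left)
qed

lemma index_le_16:
  assumes "B = b ^ d" "2 \<le> b" "b \<le> 10"
  shows "k \<le> 16"
proof (rule ccontr)
  assume "\<not> k \<le> 16"
  then obtain a c where ac: "0 < a" "0 < c" "B dvd pell a * pell_lucas c"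
      "8 * (a\<^sup>2 * c) \<le> (3 * k + 6)\<^sup>2 * (k + 6)"
    using divisor_witness by auto
  have "8 * pell k < 8 * B" using pell_less_B by simp
  also have "\<dots> \<le> 800 * (a\<^sup>2 * c)"
    using base_power_dvd_pell_mult_pell_lucas_le[OF assms(2,3) ac(1,2) ac(3)[unfolded assms(1)]] assms(1)
    by linarith
  also have "\<dots> \<le> 100 * ((3 * k + 6)\<^sup>2 * (k + 6))" using ac(4) by linarith
  finally have "2 * pell k < 25 * (3 * k + 6)\<^sup>2 * (k + 6)" by linarith
  then show False using cubic_le_pell[of k] \<open>\<not> k \<le> 16\<close> by linarith
qed

end

section \<open>The finite search\<close>

lemma num_digits_eq_floorlog: "1 < b \<Longrightarrow> num_digits b N = (if N = 0 then 1 else floorlog b N)"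
  by (simp add: num_digits_def floorlog_def)

lemma digit_power_bounds:
  assumes "1 < b"
  shows "N < b ^ num_digits b N" "b ^ num_digits b N \<le> b * max 1 N"
proof -
  have "N < b ^ num_digits b N \<and> b ^ num_digits b N \<le> b * max 1 N"
  proof (cases "N = 0")
    case False
    then have "0 < floorlog b N" using assms floorlog_eq_zero_iff[of b N] by auto
    then have "b ^ floorlog b N = b * b ^ (floorlog b N - 1)" by (metis power_eq_if neq0_conv)
    then show ?thesis
      using floorlog_bounds[of N b] False assms by (simp add: num_digits_eq_floorlog)
  qed (use assms in \<open>simp add: num_digits_def\<close>)
  then show "N < b ^ num_digits b N" "b ^ num_digits b N \<le> b * max 1 N" by simp_all
qed

text \<open>The guard \<open>x < y\<close> only serves termination.\<close>

function pell_floor :: "nat \<times> nat \<times> nat \<Rightarrow> nat \<Rightarrow> nat \<times> nat \<times> nat" where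
  "pell_floor (i, x, y) v = (if x < y \<and> y \<le> v then pell_floor (Suc i, y, 2 * y + x) v else (i, x, y))"
  by auto
termination by (relation "measure (\<lambda>((i, x, y), v). v - x)") auto

declare pell_floor.simps [simp del]

lemma pell_floor_pell:
  assumes "pell i \<le> v"
  shows "\<exists>j. pell_floor (i, pell i, pell (Suc i)) v = (j, pell j, pell (Suc j)) \<and>
    pell j \<le> v \<and> v < pell (Suc j)"
  using assms
proof (induction "v - pell i" arbitrary: i rule: less_induct)
  case less
  show ?case
  proof (cases "pell (Suc i) \<le> v")
    case True
    have "v - pell (Suc i) < v - pell i" using True pell_less_pell_Suc[of i] by linarith
    then obtain j where "pell_floor (Suc i, pell (Suc i), pell (Suc (Suc i))) v = (j, pell j, pell (Suc j))"
        "pell j \<le> v" "v < pell (Suc j)"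
      using less.hyps True by blast
    then show ?thesis using True by (auto simp: pell_floor.simps)
  next
    case False
    then show ?thesis using less.prems by (auto simp: pell_floor.simps)
  qed
qed

text \<open>The arguments \<open>q, q'\<close> of \<open>scan_lucas\<close> are \<open>pell_lucas m, pell_lucas (Suc m)\<close> and \<open>f\<close> is
  a pointer \<open>(j, pell j, pell (Suc j))\<close>. The targets \<open>B * q + p\<close> are nondecreasing in \<open>m\<close>, so the
  pointer is never reset. The floor is recomputed instead of bound by \<open>case\<close>, which would make
  the simplifier unfold the recursion symbolically.\<close>

fun scan_lucas ::
  "nat \<Rightarrow> nat \<Rightarrow> nat \<Rightarrow> nat \<Rightarrow> nat \<Rightarrow> nat \<Rightarrow> nat \<times> nat \<times> nat \<Rightarrow> (nat \<Rightarrow> nat \<Rightarrow> bool) \<Rightarrow> bool"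
where
  "scan_lucas 0 m q q' B p f R \<longleftrightarrow> True"
| "scan_lucas (Suc l) m q q' B p f R \<longleftrightarrow>
     (fst (snd (pell_floor f (B * q + p))) = B * q + p \<longrightarrow> R (fst (pell_floor f (B * q + p))) m) \<and>
     scan_lucas l (Suc m) q' (2 * q' + q) B p (pell_floor f (B * q + p)) R"

lemma scan_lucas_numeral:
  "scan_lucas (numeral l) m q q' B p f R \<longleftrightarrow>
     (fst (snd (pell_floor f (B * q + p))) = B * q + p \<longrightarrow> R (fst (pell_floor f (B * q + p))) m) \<and>
     scan_lucas (pred_numeral l) (Suc m) q' (2 * q' + q) B p (pell_floor f (B * q + p)) R"
  by (simp add: numeral_eq_Suc)

lemma scan_lucas_sound:
  assumes "scan_lucas l m0 (pell_lucas m0) (pell_lucas (Suc m0)) B p (i, pell i, pell (Suc i)) R"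
    and "pell i \<le> B * pell_lucas m0 + p" "m0 \<le> m" "m < m0 + l" "pell n = B * pell_lucas m + p"
  shows "R n m"
  using assms
proof (induction l arbitrary: m0 i)
  case (Suc l)
  obtain j where j: "pell_floor (i, pell i, pell (Suc i)) (B * pell_lucas m0 + p) = (j, pell j, pell (Suc j))"
      "pell j \<le> B * pell_lucas m0 + p" "B * pell_lucas m0 + p < pell (Suc j)"
    using pell_floor_pell[OF Suc.prems(2)] by blast
  have step: "(pell j = B * pell_lucas m0 + p \<longrightarrow> R j m0) \<and>
      scan_lucas l (Suc m0) (pell_lucas (Suc m0)) (pell_lucas (Suc (Suc m0))) B p (j, pell j, pell (Suc j)) R"
    using Suc.prems(1) j(1) by simp
  show ?case
  proof (cases "m = m0")
    case True
    then have "pell j \<le> pell n" "pell n < pell (Suc j)" using Suc.prems(5) j(2,3) by simp_all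
    then have "n = j" by simp
    then show ?thesis using step Suc.prems(5) True by simp
  next
    case False
    have "B * pell_lucas m0 \<le> B * pell_lucas (Suc m0)"
      using pell_lucas_le_pell_lucas_Suc[of m0] by (rule mult_le_mono2)
    then have "pell j \<le> B * pell_lucas (Suc m0) + p" using j(2) by linarith
    then show ?thesis
      using step Suc.prems(3-5) False by (intro Suc.IH[of "Suc m0" j]) simp_all
  qed
qed simp

definition concatenation_solutions :: "(nat \<times> nat \<times> nat \<times> nat) set" where
  "concatenation_solutions = {(2, 3, 0, 1), (2, 3, 1, 1), (2, 4, 2, 0), (2, 5, 3, 1),
     (5, 4, 0, 2), (5, 4, 1, 2), (5, 6, 3, 0), (6, 4, 0, 0), (6, 4, 1, 0)}"

definition concatenation_check :: "nat \<Rightarrow> nat \<Rightarrow> nat \<Rightarrow> nat \<Rightarrow> bool" where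
  "concatenation_check b k x y \<longleftrightarrow>
     scan_lucas (2 * k + 5) 0 2 2 (b ^ num_digits b x) x (k, x, y)
       (\<lambda>n m. (b, n, m, k) \<in> concatenation_solutions)"

lemma concatenation_check_sound:
  assumes "concatenation_check b k (pell k) (pell (Suc k))" "m \<le> 2 * k + 4"
    and "pell n = b ^ num_digits b (pell k) * pell_lucas m + pell k"
  shows "(b, n, m, k) \<in> concatenation_solutions"
proof (rule scan_lucas_sound[where R = "\<lambda>n m. (b, n, m, k) \<in> concatenation_solutions"])
  show "scan_lucas (2 * k + 5) 0 (pell_lucas 0) (pell_lucas (Suc 0)) (b ^ num_digits b (pell k)) (pell k)
      (k, pell k, pell (Suc k)) (\<lambda>n m. (b, n, m, k) \<in> concatenation_solutions)"
    using assms(1) unfolding concatenation_check_def pell_lucas.simps(1,2) .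
qed (use assms(2,3) in simp_all)

lemma all_concatenation_checks:
  assumes "2 \<le> b" "b \<le> 10"
  shows "all_terms 17 0 0 1 (concatenation_check b)"
proof -
  have "b \<in> {2, 3, 4, 5, 6, 7, 8, 9, 10}" using assms by auto
  then show ?thesis
    by (elim insertE) (simp_all add: all_terms_numeral concatenation_check_def scan_lucas_numeral
      pell_floor.simps num_digits_eq_floorlog compute_floorlog concatenation_solutions_def)
qed

lemma concatenation_solution_complete:
  assumes "2 \<le> b" "b \<le> 10" and eq: "pell n = b ^ num_digits b (pell k) * pell_lucas m + pell k"
  shows "(b, n, m, k) \<in> concatenation_solutions"
proof -
  have "1 < b" using assms(1) by simp
  interpret pell_concatenation "b ^ num_digits b (pell k)" n m k
  proof
    have "0 < num_digits b (pell k)" by (simp add: num_digits_def)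
    then have "b \<le> b ^ num_digits b (pell k)" using assms(1) by (intro self_le_power) simp_all
    then show "2 \<le> b ^ num_digits b (pell k)" using assms(1) by linarith
    have "b * max 1 (pell k) \<le> 10 * max 1 (pell k)" using assms(2) by (rule mult_le_mono1)
    then show "b ^ num_digits b (pell k) \<le> 10 * max 1 (pell k)"
      using digit_power_bounds(2)[OF \<open>1 < b\<close>, of "pell k"] by linarith
  qed (use eq digit_power_bounds(1)[OF \<open>1 < b\<close>] in simp_all)
  have "k \<le> 16" using refl assms(1,2) by (rule index_le_16)
  moreover have "all_terms 17 0 (pell 0) (pell (Suc 0)) (concatenation_check b)"
    using all_concatenation_checks[OF assms(1,2)] by simp
  ultimately have "concatenation_check b k (pell k) (pell (Suc k))"
    unfolding all_terms_iff[OF pell_like_pell] by simp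
  then show ?thesis using lucas_index_le eq by (rule concatenation_check_sound)
qed

lemma concatenation_solution_sound:
  assumes "(b, n, m, k) \<in> concatenation_solutions"
  shows "pell n = b ^ num_digits b (pell k) * pell_lucas m + pell k"
proof -
  have "pell 2 = 2" "pell 3 = 5" "pell 4 = 12" "pell 5 = 29" "pell 6 = 70"
    "pell_lucas 2 = 6" "pell_lucas 3 = 14"
    by (simp_all add: eval_nat_numeral)
  then show ?thesis
    using assms by (auto simp: concatenation_solutions_def num_digits_eq_floorlog compute_floorlog)
qed

theorem theorem4:
  fixes b n m k :: nat
  assumes "2 \<le> b" and "b \<le> 10"
  shows "pell n = b ^ num_digits b (pell k) * pell_lucas m + pell k \<longleftrightarrow>
         (b, n, m, k) \<in> {(2, 3, 0, 1), (2, 3, 1, 1), (2, 4, 2, 0), (2, 5, 3, 1),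
                          (5, 4, 0, 2), (5, 4, 1, 2), (5, 6, 3, 0),
                          (6, 4, 0, 0), (6, 4, 1, 0)}"
  using concatenation_solution_complete[OF assms, where n = n and m = m and k = k] concatenation_solution_sound[of b n m k]
  unfolding concatenation_solutions_def by (rule iffI)

end
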